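(* Let $G$ be a probability distribution on $\mathbb{R}$ (with finite second moment), let $\mu\sim G$ and $Z\sim N(0,1)$ be independent, and let $r(\tau, G) = \mathbb{E}_{\mu, Z} [(\eta(\mu+Z ; \tau) -\mu)^2]$ for $\tau\ge0$, where $\eta(a;\tau)=(|a|-\tau)_+\mathrm{sign}(a)$. If $\mathbb{P}(\mu\neq0)\neq0$, then there exists $\tau_0$ such that $\frac{\partial r(\tau, G)}{\partial \tau}\big|_{\tau=\hat{\tau}}>0$ for all $\hat\tau>\tau_0$. *)

theory Defs
  imports "HOL-Probability.Probability"
begin

definition soft_thresh :: "real \<Rightarrow> real \<Rightarrow> real" where
  "soft_thresh a \<tau> = max (\<bar>a\<bar> - \<tau>) 0 * sgn a"

definition std_normal :: "real measure" where
  "std_normal = density lborel std_normal_density"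

definition risk :: "real \<Rightarrow> real measure \<Rightarrow> real" where
  "risk \<tau> G = (\<integral>p. (soft_thresh (fst p + snd p) \<tau> - fst p)\<^sup>2 \<partial>(G \<Otimes>\<^sub>M std_normal))"

end

theory Submission
  imports Defs "HOL-Real_Asymp.Real_Asymp"
begin

text \<open>
  Write the risk as \<open>r(\<tau>, G) = E\<^sub>G \<rho>(\<mu>, \<tau>)\<close>, where \<open>\<rho>(m, \<tau>)\<close> is the risk given \<open>\<mu> = m\<close>.
  Splitting the Gaussian integral at the thresholds \<open>\<plusminus>\<tau> - m\<close> gives \<open>\<rho>\<close> in closed form, and
  \<open>\<partial>\<^sub>\<tau>\<rho>(m, \<tau>) = 2 s(m, \<tau>)\<close> with
  \<open>s(m, \<tau>) = \<tau> (\<Phi>(m - \<tau>) + \<Phi>(-m - \<tau>)) - \<phi>(m - \<tau>) - \<phi>(-m - \<tau>)\<close>.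
  The slope \<open>s\<close> is even in \<open>m\<close> with \<open>\<partial>\<^sub>m s = m (\<phi>(m - \<tau>) + \<phi>(-m - \<tau>))\<close>, so it grows with \<open>|m|\<close>:
  on a set \<open>{|\<mu>| \<ge> \<delta>}\<close> of mass \<open>p > 0\<close> it exceeds \<open>s(0, \<tau>) \<ge> -2 \<phi>(\<tau>)\<close> by at least
  \<open>\<delta>\<^sup>2/4 \<cdot> \<phi>(\<tau> - \<delta>/2)\<close>. As \<open>\<phi>(\<tau>) / \<phi>(\<tau> - \<delta>/2) \<rightarrow> 0\<close>, the derivative \<open>2 E\<^sub>G s(\<mu>, \<tau>)\<close> is
  eventually positive; differentiating under \<open>E\<^sub>G\<close> is justified by \<open>|s(m, \<tau>)| \<le> 2|\<tau>| + 2\<close>.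
\<close>

section \<open>Integrals over half-lines and parametric integrals\<close>

definition integral_upto :: "(real \<Rightarrow> real) \<Rightarrow> real \<Rightarrow> real" where
  "integral_upto f u = (\<integral>x. indicator {..u} x * f x \<partial>lborel)"

lemma has_real_derivative_integral_upto:
  assumes cont: "continuous_on UNIV f" and int: "integrable lborel f"
  shows "(integral_upto f has_real_derivative f x) (at x)"
proof -
  define c where "c = x - 1"
  define K where "K = (\<integral>y. indicator {..<c} y * f y \<partial>lborel)"
  have split: "integral_upto f u = K + integral {c..u} f" if "c \<le> u" for u
  proof -
    have si: "set_integrable lborel {c..u} f"
      by (rule borel_integrable_atLeastAtMost') (use cont in \<open>auto intro: continuous_on_subset\<close>)
    have "(\<lambda>y. indicator {..u} y * f y) = (\<lambda>y. indicator {..<c} y * f y + indicator {c..u} y * f y)"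
      using that by (auto simp: fun_eq_iff split: split_indicator)
    then have "integral_upto f u = K + (\<integral>y. indicator {c..u} y * f y \<partial>lborel)"
      unfolding integral_upto_def K_def
      using integrable_mult_indicator[OF _ int, of "{..<c}"] si
      by (simp add: set_integrable_def)
    with set_borel_integral_eq_integral(2)[OF si] show ?thesis
      by (simp add: set_lebesgue_integral_def)
  qed
  have "((\<lambda>u. integral {c..u} f) has_vector_derivative f x) (at x within {c..x+1})"
    by (rule integral_has_vector_derivative) (use cont c_def in \<open>auto intro: continuous_on_subset\<close>)
  then have "((\<lambda>u. K + integral {c..u} f) has_real_derivative f x) (at x)"
    using at_within_Icc_at[of c x "x+1"] c_def
    by (auto intro!: derivative_eq_intros simp: has_real_derivative_iff_has_vector_derivative)
  then show ?thesis
    by (rule has_field_derivative_transform_within_open[where S="{c<..}"]) (use split c_def in auto)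
qed

lemma integral_upto_eq_antiderivative:
  assumes "continuous_on UNIV f" "integrable lborel f"
    and F: "\<And>x. (F has_real_derivative f x) (at x)"
    and F_lim: "(F \<longlongrightarrow> (\<integral>x. f x \<partial>lborel)) at_top"
  shows "integral_upto f u = F u"
proof -
  define D where "D x = integral_upto f x - F x" for x
  have "\<forall>x. (D has_real_derivative 0) (at x)"
    unfolding D_def using has_real_derivative_integral_upto[OF assms(1,2)] F
    by (metis DERIV_diff diff_self)
  then have "D = (\<lambda>_. D u)"
    using DERIV_isconst_all by blast
  moreover have "(D \<longlongrightarrow> 0) at_top"
    unfolding D_def integral_upto_def
    using tendsto_diff[OF tendsto_integral_at_top[OF _ assms(2)] F_lim] by simp
  ultimately have "D u = 0"
    by (metis tendsto_const_iff trivial_limit_at_top_linorder)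
  then show ?thesis
    by (simp add: D_def)
qed

lemma has_real_derivative_integral_param:
  fixes F F' :: "'a \<Rightarrow> real \<Rightarrow> real"
  assumes M: "finite_measure M" and ab: "a < x" "x < b"
    and integrable: "\<And>s. a < s \<Longrightarrow> s < b \<Longrightarrow> integrable M (\<lambda>m. F m s)"
    and F'_measurable: "(\<lambda>m. F' m x) \<in> borel_measurable M"
    and deriv: "\<And>m s. m \<in> space M \<Longrightarrow> a < s \<Longrightarrow> s < b \<Longrightarrow> ((\<lambda>t. F m t) has_real_derivative F' m s) (at s)"
    and bound: "\<And>m s. m \<in> space M \<Longrightarrow> a < s \<Longrightarrow> s < b \<Longrightarrow> \<bar>F' m s\<bar> \<le> C"
  shows "((\<lambda>s. \<integral>m. F m s \<partial>M) has_real_derivative (\<integral>m. F' m x \<partial>M)) (at x)"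
  unfolding has_field_derivative_iff tendsto_at_iff_sequentially
proof (intro allI impI)
  fix X :: "nat \<Rightarrow> real"
  assume X: "\<forall>i. X i \<in> UNIV - {x}" and "X \<longlonglongrightarrow> x"
  then have "eventually (\<lambda>i. X i \<in> {a<..<b}) sequentially"
    using ab by (intro topological_tendstoD) auto
  then obtain N where N: "\<And>n. n \<ge> N \<Longrightarrow> X n \<in> {a<..<b}"
    by (auto simp: eventually_sequentially)
  define Y where "Y n = X (n + N)" for n
  have Y: "a < Y n" "Y n < b" "Y n \<noteq> x" for n
    using N[of "n + N"] X by (auto simp: Y_def)
  have "Y \<longlonglongrightarrow> x"
    unfolding Y_def by (rule LIMSEQ_ignore_initial_segment) fact
  have Lipschitz: "\<bar>F m (Y n) - F m x\<bar> \<le> C * \<bar>Y n - x\<bar>" if m: "m \<in> space M" for m n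
    using field_differentiable_bound[of "{a<..<b}" "F m" "F' m" C "Y n" x]
      ab Y has_field_derivative_at_within[OF deriv[OF m]] bound[OF m]
    by simp
  have "(\<lambda>n. \<integral>m. (F m (Y n) - F m x) / (Y n - x) \<partial>M) \<longlonglongrightarrow> (\<integral>m. F' m x \<partial>M)"
  proof (rule integral_dominated_convergence[where w="\<lambda>_. C"])
    show "(\<lambda>m. (F m (Y n) - F m x) / (Y n - x)) \<in> borel_measurable M" for n
      using integrable[OF Y(1,2)] integrable[OF ab] by measurable
    show "integrable M (\<lambda>_. C)"
      using M by (simp add: finite_measure.integrable_const)
    show "AE m in M. (\<lambda>n. (F m (Y n) - F m x) / (Y n - x)) \<longlonglongrightarrow> F' m x"
    proof (rule AE_I2)
      fix m assume "m \<in> space M"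
      then have "((\<lambda>t. (F m t - F m x) / (t - x)) \<longlongrightarrow> F' m x) (at x)"
        using deriv ab by (simp add: has_field_derivative_iff)
      then show "(\<lambda>n. (F m (Y n) - F m x) / (Y n - x)) \<longlonglongrightarrow> F' m x"
        unfolding tendsto_at_iff_sequentially using Y \<open>Y \<longlonglongrightarrow> x\<close> by (auto simp: comp_def)
    qed
    show "AE m in M. norm ((F m (Y n) - F m x) / (Y n - x)) \<le> C" for n
      using Lipschitz Y(3)[of n] by (auto simp: abs_divide divide_le_eq)
  qed fact
  moreover have "(\<integral>m. F m (Y n) - F m x \<partial>M) = (\<integral>m. F m (Y n) \<partial>M) - (\<integral>m. F m x \<partial>M)" for n
    using integrable[OF Y(1,2)] integrable[OF ab] by (rule Bochner_Integration.integral_diff)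
  ultimately have "(\<lambda>n. ((\<integral>m. F m (Y n) \<partial>M) - (\<integral>m. F m x \<partial>M)) / (Y n - x)) \<longlonglongrightarrow> (\<integral>m. F' m x \<partial>M)"
    by (simp only: integral_divide_zero)
  then show "((\<lambda>y. ((\<integral>m. F m y \<partial>M) - (\<integral>m. F m x \<partial>M)) / (y - x)) \<circ> X) \<longlonglongrightarrow> (\<integral>m. F' m x \<partial>M)"
    unfolding Y_def comp_def by (rule LIMSEQ_offset)
qed

lemma exists_measure_abs_ge_pos:
  fixes M :: "real measure"
  assumes "finite_measure M" "sets M = sets borel" and "measure M {x. x \<noteq> 0} \<noteq> 0"
  shows "\<exists>\<delta>>0. 0 < measure M {x. \<delta> \<le> \<bar>x\<bar>}"
proof (rule ccontr)
  interpret finite_measure M by fact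
  define A where "A n = {x::real. 1 / Suc n \<le> \<bar>x\<bar>}" for n
  assume "\<not> ?thesis"
  moreover have "0 < 1 / real (Suc n)" for n
    by simp
  ultimately have not_pos: "\<not> 0 < measure M (A n)" for n
    unfolding A_def by blast
  have zero: "measure M (A n) = 0" for n
    using not_pos[of n] measure_nonneg[of M "A n"] by linarith
  have "A m \<subseteq> A n" if "m \<le> n" for m n
  proof -
    have "1 / real (Suc n) \<le> 1 / real (Suc m)"
      using that by (simp add: frac_le)
    then show ?thesis
      unfolding A_def by auto
  qed
  then have "(\<lambda>n. measure M (A n)) \<longlonglongrightarrow> measure M (\<Union>n. A n)"
    using assms(2) by (intro finite_Lim_measure_incseq) (auto simp: A_def incseq_def)
  moreover have "(\<Union>n. A n) = {x. x \<noteq> 0}"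
  proof (intro set_eqI iffI)
    fix x :: real assume "x \<in> {x. x \<noteq> 0}"
    then obtain n where "inverse (real (Suc n)) < \<bar>x\<bar>"
      using reals_Archimedean[of "\<bar>x\<bar>"] by auto
    then have "x \<in> A n"
      by (simp add: A_def inverse_eq_divide)
    then show "x \<in> (\<Union>n. A n)"
      by blast
  qed (auto simp: A_def)
  ultimately show False
    using assms(3) by (simp add: zero LIMSEQ_const_iff)
qed

section \<open>The standard normal density and distribution function\<close>

lemma std_normal_density_minus [simp]: "std_normal_density (- x) = std_normal_density x"
  by (simp add: std_normal_density_def)

lemma std_normal_density_le_1: "std_normal_density x \<le> 1"
proof -
  have "1 / sqrt (2 * pi) \<le> 1"
    using pi_gt3 by simp
  moreover have "exp (- x\<^sup>2 / 2) \<le> 1"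
    by simp
  ultimately show ?thesis
    unfolding std_normal_density_def by (intro mult_le_one) auto
qed

lemma std_normal_density_abs_antimono:
  assumes "\<bar>a\<bar> \<le> \<bar>b\<bar>"
  shows "std_normal_density b \<le> std_normal_density a"
proof -
  have "a\<^sup>2 \<le> b\<^sup>2"
    using assms by (simp add: abs_le_square_iff)
  then show ?thesis
    unfolding std_normal_density_def by (simp add: divide_right_mono)
qed

lemma has_real_derivative_std_normal_density [derivative_intros]:
  "(f has_real_derivative D) (at x within S) \<Longrightarrow>
    ((\<lambda>x. std_normal_density (f x)) has_real_derivative - f x * std_normal_density (f x) * D) (at x within S)"
  unfolding std_normal_density_def
  by (auto intro!: derivative_eq_intros simp: field_simps)

lemma continuous_on_std_normal_density: "continuous_on UNIV std_normal_density"
  unfolding std_normal_density_def by (intro continuous_intros) auto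

definition std_normal_cdf :: "real \<Rightarrow> real" where
  "std_normal_cdf = integral_upto std_normal_density"

lemma has_real_derivative_std_normal_cdf [derivative_intros]:
  "(f has_real_derivative D) (at x within S) \<Longrightarrow>
    ((\<lambda>x. std_normal_cdf (f x)) has_real_derivative std_normal_density (f x) * D) (at x within S)"
  using DERIV_chain2[OF has_real_derivative_integral_upto[OF continuous_on_std_normal_density]]
  by (simp add: std_normal_cdf_def)

lemma std_normal_cdf_at_top: "(std_normal_cdf \<longlongrightarrow> 1) at_top"
  using tendsto_integral_at_top[of lborel std_normal_density]
  by (simp add: std_normal_cdf_def integral_upto_def[abs_def])

lemma std_normal_cdf_nonneg: "0 \<le> std_normal_cdf u"
  unfolding std_normal_cdf_def integral_upto_def by (rule integral_nonneg_AE) auto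

lemma std_normal_cdf_le_1: "std_normal_cdf u \<le> 1"
proof -
  have "std_normal_cdf u \<le> (\<integral>x. std_normal_density x \<partial>lborel)"
    unfolding std_normal_cdf_def integral_upto_def
    using integrable_mult_indicator[of "{..u}" lborel std_normal_density]
    by (intro integral_mono) (auto split: split_indicator)
  then show ?thesis
    by simp
qed

lemma std_normal_cdf_measurable [measurable]: "std_normal_cdf \<in> borel_measurable borel"
proof -
  have "continuous_on UNIV std_normal_cdf"
    using has_real_derivative_std_normal_cdf[OF DERIV_ident]
    by (meson DERIV_isCont continuous_at_imp_continuous_on)
  then show ?thesis
    by (rule borel_measurable_continuous_onI)
qed

lemma eventually_std_normal_density_less_shifted:
  assumes "0 < d" "0 < c"
  shows "eventually (\<lambda>\<tau>. a * std_normal_density \<tau> < c * std_normal_density (\<tau> - d)) at_top"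
  using assms unfolding std_normal_density_def by real_asymp

section \<open>Gaussian integrals of quadratics\<close>

definition gauss_quadratic :: "real \<Rightarrow> real \<Rightarrow> real \<Rightarrow> real \<Rightarrow> real" where
  "gauss_quadratic c0 c1 c2 z = (c0 + c1 * z + c2 * z\<^sup>2) * std_normal_density z"

definition gauss_quadratic_cdf :: "real \<Rightarrow> real \<Rightarrow> real \<Rightarrow> real \<Rightarrow> real" where
  "gauss_quadratic_cdf c0 c1 c2 u = (c0 + c2) * std_normal_cdf u - (c1 + c2 * u) * std_normal_density u"

lemma gauss_quadratic_measurable [measurable]: "gauss_quadratic c0 c1 c2 \<in> borel_measurable borel"
  unfolding gauss_quadratic_def[abs_def] by measurable

lemma gauss_quadratic_minus: "gauss_quadratic c0 c1 c2 (- z) = gauss_quadratic c0 (- c1) c2 z"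
  by (simp add: gauss_quadratic_def)

lemma gauss_quadratic_eq_moments:
  "gauss_quadratic c0 c1 c2 z =
    c0 * std_normal_density z + c1 * (std_normal_density z * z) + c2 * (std_normal_density z * z\<^sup>2)"
  by (simp add: gauss_quadratic_def algebra_simps)

lemma std_normal_moments_1_2:
  "integrable lborel (\<lambda>z. std_normal_density z * z)" "(\<integral>z. std_normal_density z * z \<partial>lborel) = 0"
  "integrable lborel (\<lambda>z. std_normal_density z * z\<^sup>2)" "(\<integral>z. std_normal_density z * z\<^sup>2 \<partial>lborel) = 1"
  using integrable_std_normal_moment[of 1] integral_std_normal_moment_odd[of 0]
    integrable_std_normal_moment[of 2] integral_std_normal_moment_even[of 1]
  by (simp_all add: numeral_eq_Suc)

lemma integrable_gauss_quadratic: "integrable lborel (gauss_quadratic c0 c1 c2)"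
  unfolding gauss_quadratic_eq_moments[abs_def]
  by (intro Bochner_Integration.integrable_add integrable_mult_right std_normal_moments_1_2 integrable_normal_density) auto

lemma integral_gauss_quadratic: "(\<integral>z. gauss_quadratic c0 c1 c2 z \<partial>lborel) = c0 + c2"
  unfolding gauss_quadratic_eq_moments
  by (simp add: std_normal_moments_1_2)

lemma integral_upto_gauss_quadratic:
  "integral_upto (gauss_quadratic c0 c1 c2) u = gauss_quadratic_cdf c0 c1 c2 u"
proof (rule integral_upto_eq_antiderivative)
  show "continuous_on UNIV (gauss_quadratic c0 c1 c2)"
    unfolding gauss_quadratic_def[abs_def] by (intro continuous_intros continuous_on_std_normal_density)
  show "integrable lborel (gauss_quadratic c0 c1 c2)"
    by (rule integrable_gauss_quadratic)
  show "(gauss_quadratic_cdf c0 c1 c2 has_real_derivative gauss_quadratic c0 c1 c2 x) (at x)" for x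
    unfolding gauss_quadratic_cdf_def[abs_def]
    by (rule derivative_eq_intros refl)+ (simp add: gauss_quadratic_def algebra_simps power2_eq_square)
  have "((\<lambda>u. c1 * std_normal_density u + c2 * (u * std_normal_density u)) \<longlongrightarrow> 0) at_top"
    unfolding std_normal_density_def by real_asymp
  then have "(gauss_quadratic_cdf c0 c1 c2 \<longlongrightarrow> (c0 + c2) * 1 - 0) at_top"
    unfolding gauss_quadratic_cdf_def[abs_def]
    by (intro tendsto_intros std_normal_cdf_at_top) (simp add: algebra_simps)
  then show "(gauss_quadratic_cdf c0 c1 c2 \<longlongrightarrow> (\<integral>z. gauss_quadratic c0 c1 c2 z \<partial>lborel)) at_top"
    by (simp add: integral_gauss_quadratic)
qed

lemma integral_lower_tail_gauss_quadratic:
  "(\<integral>z. indicator {..<b} z * gauss_quadratic c0 c1 c2 z \<partial>lborel) = gauss_quadratic_cdf c0 c1 c2 b"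
proof -
  have "(\<integral>z. indicator {..<b} z * gauss_quadratic c0 c1 c2 z \<partial>lborel) = integral_upto (gauss_quadratic c0 c1 c2) b"
    unfolding integral_upto_def
    using AE_lborel_singleton[of b] by (intro integral_cong_AE) (auto split: split_indicator)
  then show ?thesis
    by (simp add: integral_upto_gauss_quadratic)
qed

lemma integral_upper_tail_gauss_quadratic:
  "(\<integral>z. indicator {a<..} z * gauss_quadratic c0 c1 c2 z \<partial>lborel) = gauss_quadratic_cdf c0 (- c1) c2 (- a)"
proof -
  have "(\<integral>z. indicator {a<..} z * gauss_quadratic c0 c1 c2 z \<partial>lborel) =
      (\<integral>z. indicator {..<- a} z * gauss_quadratic c0 (- c1) c2 z \<partial>lborel)"
    by (subst lborel_integral_real_affine[where c="-1" and t=0])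
       (auto simp: gauss_quadratic_minus intro!: Bochner_Integration.integral_cong split: split_indicator)
  then show ?thesis
    by (simp add: integral_lower_tail_gauss_quadratic)
qed

section \<open>The risk given the signal\<close>

lemma soft_thresh_measurable [measurable]: "(\<lambda>a. soft_thresh a \<tau>) \<in> borel_measurable borel"
  unfolding soft_thresh_def by measurable

definition cond_risk :: "real \<Rightarrow> real \<Rightarrow> real" where
  "cond_risk m \<tau> = (\<integral>z. (soft_thresh (m + z) \<tau> - m)\<^sup>2 \<partial>std_normal)"

lemma soft_thresh_loss_split:
  assumes "0 \<le> \<tau>"
  shows "std_normal_density z * (soft_thresh (m + z) \<tau> - m)\<^sup>2 =
    m\<^sup>2 * std_normal_density z
    + indicator {\<tau> - m<..} z * gauss_quadratic (\<tau>\<^sup>2 - m\<^sup>2) (- 2 * \<tau>) 1 z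
    + indicator {..< - m - \<tau>} z * gauss_quadratic (\<tau>\<^sup>2 - m\<^sup>2) (2 * \<tau>) 1 z"
proof -
  consider "\<tau> < m + z" | "m + z < - \<tau>" | "\<bar>m + z\<bar> \<le> \<tau>"
    by linarith
  then show ?thesis
  proof cases
    case 1
    then have loss: "(soft_thresh (m + z) \<tau> - m)\<^sup>2 = (z - \<tau>)\<^sup>2"
      using assms by (simp add: soft_thresh_def)
    show ?thesis
      unfolding loss using 1 assms
      by (simp add: gauss_quadratic_def power2_eq_square algebra_simps)
  next
    case 2
    then have loss: "(soft_thresh (m + z) \<tau> - m)\<^sup>2 = (z + \<tau>)\<^sup>2"
      using assms by (simp add: soft_thresh_def add.commute)
    show ?thesis
      unfolding loss using 2 assms
      by (simp add: gauss_quadratic_def power2_eq_square algebra_simps)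
  next
    case 3
    then show ?thesis
      by (simp add: soft_thresh_def)
  qed
qed

lemma cond_risk_closed_form:
  assumes "0 \<le> \<tau>"
  shows "cond_risk m \<tau> = m\<^sup>2 + gauss_quadratic_cdf (\<tau>\<^sup>2 - m\<^sup>2) (2 * \<tau>) 1 (m - \<tau>)
    + gauss_quadratic_cdf (\<tau>\<^sup>2 - m\<^sup>2) (2 * \<tau>) 1 (- m - \<tau>)"
proof -
  have tail_integrable: "integrable lborel (\<lambda>z. indicator S z * gauss_quadratic c0 c1 c2 z)"
    if "S \<in> sets borel" for S c0 c1 c2
    using integrable_mult_indicator[of S lborel "gauss_quadratic c0 c1 c2"] that integrable_gauss_quadratic
    by simp
  have "cond_risk m \<tau> = (\<integral>z. std_normal_density z * (soft_thresh (m + z) \<tau> - m)\<^sup>2 \<partial>lborel)"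
    unfolding cond_risk_def std_normal_def by (subst integral_density) auto
  also have "\<dots> = m\<^sup>2 * (\<integral>z. std_normal_density z \<partial>lborel)
    + (\<integral>z. indicator {\<tau> - m<..} z * gauss_quadratic (\<tau>\<^sup>2 - m\<^sup>2) (- 2 * \<tau>) 1 z \<partial>lborel)
    + (\<integral>z. indicator {..< - m - \<tau>} z * gauss_quadratic (\<tau>\<^sup>2 - m\<^sup>2) (2 * \<tau>) 1 z \<partial>lborel)"
    unfolding soft_thresh_loss_split[OF assms]
    by (simp add: tail_integrable Bochner_Integration.integrable_add)
  also have "\<dots> = m\<^sup>2 + gauss_quadratic_cdf (\<tau>\<^sup>2 - m\<^sup>2) (2 * \<tau>) 1 (m - \<tau>)
    + gauss_quadratic_cdf (\<tau>\<^sup>2 - m\<^sup>2) (2 * \<tau>) 1 (- m - \<tau>)"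
    by (simp add: integral_upper_tail_gauss_quadratic integral_lower_tail_gauss_quadratic)
  finally show ?thesis .
qed

definition risk_slope :: "real \<Rightarrow> real \<Rightarrow> real" where
  "risk_slope m \<tau> = \<tau> * (std_normal_cdf (m - \<tau>) + std_normal_cdf (- m - \<tau>))
    - std_normal_density (m - \<tau>) - std_normal_density (- m - \<tau>)"

lemma risk_slope_measurable [measurable]: "(\<lambda>m. risk_slope m \<tau>) \<in> borel_measurable borel"
  unfolding risk_slope_def by measurable

lemma has_real_derivative_cond_risk:
  assumes "0 < \<tau>"
  shows "(cond_risk m has_real_derivative 2 * risk_slope m \<tau>) (at \<tau>)"
proof -
  let ?closed = "\<lambda>t. m\<^sup>2 + gauss_quadratic_cdf (t\<^sup>2 - m\<^sup>2) (2 * t) 1 (m - t)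
    + gauss_quadratic_cdf (t\<^sup>2 - m\<^sup>2) (2 * t) 1 (- m - t)"
  have "(?closed has_real_derivative 2 * risk_slope m \<tau>) (at \<tau>)"
    unfolding gauss_quadratic_cdf_def
    by (rule derivative_eq_intros refl)+ (simp add: risk_slope_def algebra_simps power2_eq_square)
  then show ?thesis
    by (rule has_field_derivative_transform_within_open[where S="{0<..}"])
       (use assms cond_risk_closed_form in auto)
qed

lemma risk_slope_minus [simp]: "risk_slope (- m) \<tau> = risk_slope m \<tau>"
  by (simp add: risk_slope_def algebra_simps)

lemma risk_slope_abs: "risk_slope \<bar>m\<bar> \<tau> = risk_slope m \<tau>"
  by (cases "0 \<le> m") auto

lemma has_real_derivative_risk_slope:
  "((\<lambda>m. risk_slope m \<tau>) has_real_derivative m * (std_normal_density (m - \<tau>) + std_normal_density (- m - \<tau>))) (at m)"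
  unfolding risk_slope_def
  by (rule derivative_eq_intros refl)+ (simp add: algebra_simps)

lemma abs_risk_slope_le: "\<bar>risk_slope m \<tau>\<bar> \<le> 2 * \<bar>\<tau>\<bar> + 2"
proof -
  have "\<bar>std_normal_cdf (m - \<tau>) + std_normal_cdf (- m - \<tau>)\<bar> \<le> 2"
    using std_normal_cdf_nonneg std_normal_cdf_le_1 by (smt (verit))
  then have "\<bar>\<tau> * (std_normal_cdf (m - \<tau>) + std_normal_cdf (- m - \<tau>))\<bar> \<le> \<bar>\<tau>\<bar> * 2"
    unfolding abs_mult by (rule mult_left_mono) simp
  then show ?thesis
    unfolding risk_slope_def
    using std_normal_density_le_1[of "m - \<tau>"] std_normal_density_le_1[of "- m - \<tau>"]
      normal_density_nonneg[of 0 1 "m - \<tau>"] normal_density_nonneg[of 0 1 "- m - \<tau>"]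
    by linarith
qed

lemma risk_slope_zero_ge: "0 \<le> \<tau> \<Longrightarrow> - 2 * std_normal_density \<tau> \<le> risk_slope 0 \<tau>"
  unfolding risk_slope_def using std_normal_cdf_nonneg[of "- \<tau>"] by simp

lemma risk_slope_mono:
  assumes "0 \<le> m" "m \<le> m'"
  shows "risk_slope m \<tau> \<le> risk_slope m' \<tau>"
  using assms(2)
proof (rule DERIV_nonneg_imp_nondecreasing)
  fix x assume "m \<le> x"
  with assms(1) have "0 \<le> x * (std_normal_density (x - \<tau>) + std_normal_density (- x - \<tau>))"
    by simp
  then show "\<exists>y. ((\<lambda>m. risk_slope m \<tau>) has_real_derivative y) (at x) \<and> 0 \<le> y"
    using has_real_derivative_risk_slope by blast
qed

lemma risk_slope_gain:
  assumes "0 < \<delta>" "\<delta> \<le> \<tau>" "\<delta> \<le> \<bar>m\<bar>"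
  shows "risk_slope 0 \<tau> + \<delta>\<^sup>2 / 4 * std_normal_density (\<tau> - \<delta> / 2) \<le> risk_slope m \<tau>"
proof -
  define c where "c = \<delta> / 2 * std_normal_density (\<tau> - \<delta> / 2)"
  have "risk_slope (\<delta> / 2) \<tau> - c * (\<delta> / 2) \<le> risk_slope \<delta> \<tau> - c * \<delta>"
  proof (rule DERIV_nonneg_imp_nondecreasing[where f="\<lambda>x. risk_slope x \<tau> - c * x"])
    fix x assume x: "\<delta> / 2 \<le> x" "x \<le> \<delta>"
    have "std_normal_density (\<tau> - \<delta> / 2) \<le> std_normal_density (x - \<tau>)"
      using x assms by (intro std_normal_density_abs_antimono) simp
    then have "c \<le> x * std_normal_density (x - \<tau>)"
      unfolding c_def using x assms by (intro mult_mono) auto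
    also have "\<dots> \<le> x * (std_normal_density (x - \<tau>) + std_normal_density (- x - \<tau>))"
      using x assms by (intro mult_left_mono) auto
    finally have "c \<le> x * (std_normal_density (x - \<tau>) + std_normal_density (- x - \<tau>))" .
    moreover have "((\<lambda>x. risk_slope x \<tau> - c * x) has_real_derivative
        x * (std_normal_density (x - \<tau>) + std_normal_density (- x - \<tau>)) - c) (at x)"
      by (rule derivative_eq_intros has_real_derivative_risk_slope refl)+ simp
    ultimately show "\<exists>y. ((\<lambda>x. risk_slope x \<tau> - c * x) has_real_derivative y) (at x) \<and> 0 \<le> y"
      by auto
  qed (use assms in simp)
  then have "risk_slope (\<delta> / 2) \<tau> + \<delta>\<^sup>2 / 4 * std_normal_density (\<tau> - \<delta> / 2) \<le> risk_slope \<delta> \<tau>"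
    by (simp add: c_def power2_eq_square algebra_simps)
  moreover have "risk_slope 0 \<tau> \<le> risk_slope (\<delta> / 2) \<tau>" "risk_slope \<delta> \<tau> \<le> risk_slope \<bar>m\<bar> \<tau>"
    using assms by (auto intro: risk_slope_mono)
  ultimately show ?thesis
    using risk_slope_abs[of m \<tau>] by linarith
qed

section \<open>The risk and its derivative\<close>

lemma abs_soft_thresh_diff_le: "\<bar>soft_thresh a \<tau> - a\<bar> \<le> \<bar>\<tau>\<bar>"
  unfolding soft_thresh_def by (auto simp: sgn_if max_def abs_if)

lemma soft_thresh_loss_le: "(soft_thresh (m + z) \<tau> - m)\<^sup>2 \<le> 2 * \<tau>\<^sup>2 + 2 * z\<^sup>2"
proof -
  define d where "d = soft_thresh (m + z) \<tau> - (m + z)"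
  have "d\<^sup>2 \<le> \<tau>\<^sup>2"
    using abs_soft_thresh_diff_le[of "m + z" \<tau>] by (simp add: d_def abs_le_square_iff)
  moreover have "(d + z)\<^sup>2 \<le> 2 * d\<^sup>2 + 2 * z\<^sup>2"
    using zero_le_power2[of "d - z"] by (simp add: power2_eq_square algebra_simps)
  ultimately show ?thesis
    by (simp add: d_def)
qed

lemma
  assumes "prob_space G" and [measurable_cong]: "sets G = sets borel"
  shows risk_eq_integral_cond_risk: "risk \<tau> G = (\<integral>m. cond_risk m \<tau> \<partial>G)"
    and integrable_cond_risk: "integrable G (\<lambda>m. cond_risk m \<tau>)"
proof -
  interpret G: prob_space G by fact
  interpret N: prob_space std_normal
    unfolding std_normal_def by (rule prob_space_normal_density) simp
  interpret P: pair_sigma_finite G std_normal ..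
  have [measurable_cong]: "sets std_normal = sets borel"
    by (simp add: std_normal_def)
  have "integrable std_normal (\<lambda>z. z\<^sup>2)"
    unfolding std_normal_def using std_normal_moments_1_2(3)
    by (subst integrable_density) (auto simp: mult.commute)
  then have "integrable (G \<Otimes>\<^sub>M std_normal) (\<lambda>p. 2 * \<tau>\<^sup>2 + 2 * (snd p)\<^sup>2)"
    by (intro P.Fubini_integrable) auto
  then have "integrable (G \<Otimes>\<^sub>M std_normal) (\<lambda>p. (soft_thresh (fst p + snd p) \<tau> - fst p)\<^sup>2)"
    by (rule Bochner_Integration.integrable_bound) (auto intro: soft_thresh_loss_le)
  from P.integral_fst'[OF this] P.integrable_fst'[OF this]
  show "risk \<tau> G = (\<integral>m. cond_risk m \<tau> \<partial>G)" "integrable G (\<lambda>m. cond_risk m \<tau>)"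
    unfolding risk_def cond_risk_def by simp_all
qed

lemma has_real_derivative_risk:
  assumes G: "prob_space G" "sets G = sets borel" and "0 < \<tau>"
  shows "((\<lambda>t. risk t G) has_real_derivative 2 * (\<integral>m. risk_slope m \<tau> \<partial>G)) (at \<tau>)"
proof -
  interpret G: prob_space G by fact
  have [measurable_cong]: "sets G = sets borel" by fact
  have "((\<lambda>t. \<integral>m. cond_risk m t \<partial>G) has_real_derivative (\<integral>m. 2 * risk_slope m \<tau> \<partial>G)) (at \<tau>)"
  proof (rule has_real_derivative_integral_param[where a=0 and b="\<tau> + 1" and C="4 * (\<tau> + 1) + 4"])
    show "((\<lambda>t. cond_risk m t) has_real_derivative 2 * risk_slope m s) (at s)" if "0 < s" for m s
      using has_real_derivative_cond_risk[OF that] by simp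
    show "\<bar>2 * risk_slope m s\<bar> \<le> 4 * (\<tau> + 1) + 4" if "0 < s" "s < \<tau> + 1" for m s
      using abs_risk_slope_le[of m s] that by simp
  qed (use assms G.finite_measure_axioms integrable_cond_risk[OF G] in auto)
  then show ?thesis
    using risk_eq_integral_cond_risk[OF G] by simp
qed

lemma eventually_integral_risk_slope_pos:
  assumes "prob_space G" and [measurable_cong]: "sets G = sets borel"
    and "0 < \<delta>" and mass: "0 < measure G {m. \<delta> \<le> \<bar>m\<bar>}"
  shows "eventually (\<lambda>\<tau>. 0 < (\<integral>m. risk_slope m \<tau> \<partial>G)) at_top"
proof -
  interpret G: prob_space G by fact
  define A where "A = {m. \<delta> \<le> \<bar>m\<bar>}"
  define p where "p = measure G A"
  have A [measurable]: "A \<in> sets G"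
    unfolding A_def by measurable
  have tail: "eventually (\<lambda>\<tau>. 2 * std_normal_density \<tau> < \<delta>\<^sup>2 / 4 * p * std_normal_density (\<tau> - \<delta> / 2)) at_top"
    using \<open>0 < \<delta>\<close> mass unfolding p_def A_def by (intro eventually_std_normal_density_less_shifted) auto
  have lower: "risk_slope 0 \<tau> + \<delta>\<^sup>2 / 4 * p * std_normal_density (\<tau> - \<delta> / 2) \<le> (\<integral>m. risk_slope m \<tau> \<partial>G)"
    if "\<delta> \<le> \<tau>" for \<tau>
  proof -
    let ?c = "\<delta>\<^sup>2 / 4 * std_normal_density (\<tau> - \<delta> / 2)"
    have "(\<integral>m. risk_slope 0 \<tau> + ?c * indicator A m \<partial>G) \<le> (\<integral>m. risk_slope m \<tau> \<partial>G)"
    proof (rule integral_mono)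
      show "integrable G (\<lambda>m. risk_slope m \<tau>)"
        using abs_risk_slope_le
        by (intro G.integrable_const_bound[where B="2 * \<bar>\<tau>\<bar> + 2"]) auto
      show "risk_slope 0 \<tau> + ?c * indicator A m \<le> risk_slope m \<tau>" for m
      proof (cases "m \<in> A")
        case True
        then show ?thesis
          using risk_slope_gain[OF \<open>0 < \<delta>\<close> that] by (simp add: A_def)
      next
        case False
        have "risk_slope 0 \<tau> \<le> risk_slope \<bar>m\<bar> \<tau>"
          by (rule risk_slope_mono) auto
        with False show ?thesis
          by (simp add: risk_slope_abs)
      qed
    qed (auto simp: G.emeasure_eq_measure)
    moreover have "(\<integral>m. risk_slope 0 \<tau> + ?c * indicator A m \<partial>G) = risk_slope 0 \<tau> + ?c * p"
      by (subst Bochner_Integration.integral_add) (auto simp: p_def G.prob_space G.emeasure_eq_measure)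
    ultimately show ?thesis
      by (simp add: algebra_simps)
  qed
  from tail eventually_ge_at_top[of \<delta>] show ?thesis
  proof eventually_elim
    case (elim \<tau>)
    with \<open>0 < \<delta>\<close> show ?case
      using lower[of \<tau>] risk_slope_zero_ge[of \<tau>] by linarith
  qed
qed

theorem proposition2:
  fixes G :: "real measure"
  assumes "prob_space G"
    and "sets G = sets borel"
    and "integrable G (\<lambda>x. x\<^sup>2)"
    and "measure G {x. x \<noteq> 0} \<noteq> 0"
  shows "\<exists>\<tau>0 \<ge> 0. \<forall>\<tau>. \<tau> > \<tau>0 \<longrightarrow>
           (\<exists>D. ((\<lambda>t. risk t G) has_real_derivative D) (at \<tau>) \<and> D > 0)"
proof -
  interpret G: prob_space G by fact
  obtain \<delta> where "0 < \<delta>" "0 < measure G {m. \<delta> \<le> \<bar>m\<bar>}"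
    using exists_measure_abs_ge_pos[OF G.finite_measure_axioms assms(2,4)] by blast
  then have "eventually (\<lambda>\<tau>. 0 < \<tau> \<and> 0 < (\<integral>m. risk_slope m \<tau> \<partial>G)) at_top"
    using eventually_integral_risk_slope_pos[OF assms(1,2)] eventually_gt_at_top[of 0]
    by (auto intro: eventually_conj)
  then obtain N where N: "\<And>\<tau>. N \<le> \<tau> \<Longrightarrow> 0 < \<tau> \<and> 0 < (\<integral>m. risk_slope m \<tau> \<partial>G)"
    by (auto simp: eventually_at_top_linorder)
  show ?thesis
  proof (rule exI[of _ "max N 0"], intro conjI allI impI)
    fix \<tau> assume "max N 0 < \<tau>"
    with N[of \<tau>] show "\<exists>D. ((\<lambda>t. risk t G) has_real_derivative D) (at \<tau>) \<and> D > 0"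
      using has_real_derivative_risk[OF assms(1,2)] by fastforce
  qed simp
qed

end
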